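(* Let $n\in\mathbb{N}$ and $c=(c_0,\dots,c_n)\in\mathbb{C}^{n+1}$ with $c_n=1$. Then for every $\omega\in\mathscr{C}^n(\mathbb{R})$ with $D_c(\omega)=0$ and for all $u,v\in\mathbb{R}$, \[ \omega(u+v)=\sum_{j=0}^{n-1}\sum_{i=0}^{n-1-j}c_{i+j+1}\,\omega_c^{(i)}(u)\,\omega^{(j)}(v). \]
   Context: For an open interval $J\subseteq\mathbb{R}$, $\mathscr{C}^n(J)$ denotes the space of $n$ times continuously differentiable complex-valued functions on $J$. For $c=(c_0,\dots,c_n)\in\mathbb{C}^{n+1}$ with $c_n=1$, the differential operator $D_c$ is defined by $D_c(f):=c_nf^{(n)}+\dots+c_1f'+c_0f$ for $f\in\mathscr{C}^n(J)$. The characteristic solution $\omega_c\colon\mathbb{R}\to\mathbb{C}$ is the unique solution of the initial value problem $D_c(\omega_c)=0$, $\omega_c^{(k)}(0)=\delta_{k,n-1}$ for $k\in\{0,\dots,n-1\}$ ($\delta$ is the Kronecker delta). *)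

theory Defs
  imports "HOL-Analysis.Analysis"
begin

definition hderiv :: "nat \<Rightarrow> (real \<Rightarrow> complex) \<Rightarrow> real \<Rightarrow> complex" where
  "hderiv k f = ((\<lambda>g x. vector_derivative g (at x)) ^^ k) f"

definition Cn :: "nat \<Rightarrow> real set \<Rightarrow> (real \<Rightarrow> complex) set" where
  "Cn n J = {f. (\<forall>k<n. \<forall>x\<in>J. (hderiv k f has_vector_derivative hderiv (Suc k) f x) (at x))
               \<and> continuous_on J (hderiv n f)}"

definition Dop :: "nat \<Rightarrow> (nat \<Rightarrow> complex) \<Rightarrow> (real \<Rightarrow> complex) \<Rightarrow> real \<Rightarrow> complex" where
  "Dop n c f = (\<lambda>x. \<Sum>k\<le>n. c k * hderiv k f x)"

definition char_sol :: "nat \<Rightarrow> (nat \<Rightarrow> complex) \<Rightarrow> real \<Rightarrow> complex" where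
  "char_sol n c = (THE w. w \<in> Cn n UNIV \<and> Dop n c w = (\<lambda>_. 0) \<and>
      (\<forall>k<n. hderiv k w 0 = (if k = n - 1 then 1 else 0)))"

end

theory Submission
  imports Defs
begin

text \<open>
  With \<open>y k\<close> standing for the \<open>k\<close>-th derivative, \<open>D_c \<omega> = 0\<close> is a first-order linear system
  whose solutions are determined by their values at one point: near a common zero, the mean
  value theorem bounds the maximum of \<open>\<Sum>k. |y k|\<close> on a short interval by half of itself, so
  the common zero set is open as well as closed. The characteristic solution is the exponential
  generating function of the sequence \<open>s\<close> that satisfies the recurrence of \<open>D_c\<close> with
  \<open>s m = \<delta>(m, n - 1)\<close> for \<open>m < n\<close>, and its shifted derivatives solve the system too.
  For fixed \<open>v\<close> both sides of the identity are therefore solutions in \<open>u\<close>, and they agree at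
  \<open>u = 0\<close> because \<open>\<Sum>i. c (i + j + 1) * s (k + i) = \<delta>(j, k)\<close>.
\<close>

text \<open>The Taylor coefficients of \<open>\<omega>\<^sub>c\<close> at \<open>0\<close>.\<close>

function char_coeff :: "nat \<Rightarrow> (nat \<Rightarrow> complex) \<Rightarrow> nat \<Rightarrow> complex" where
  "char_coeff n c m =
    (if m < n then (if Suc m = n then 1 else 0)
     else - (\<Sum>j<n. c j * char_coeff n c (m - n + j)))"
  by auto
termination by (relation "Wellfounded.measure (\<lambda>(n, c, m). m)") auto

declare char_coeff.simps [simp del]

lemma char_coeff_initial: "m < n \<Longrightarrow> char_coeff n c m = (if Suc m = n then 1 else 0)"
  by (simp add: char_coeff.simps)

lemma char_coeff_recurrence: "char_coeff n c (m + n) = - (\<Sum>j<n. c j * char_coeff n c (m + j))"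
  by (subst char_coeff.simps) simp

lemma norm_char_coeff_le:
  assumes "0 < n"
  shows "norm (char_coeff n c m) \<le> (1 + (\<Sum>j<n. norm (c j))) ^ m"
proof -
  define K where "K = 1 + (\<Sum>j<n. norm (c j))"
  have K1: "1 \<le> K" unfolding K_def by (simp add: sum_nonneg)
  show ?thesis unfolding K_def[symmetric]
  proof (induction m rule: less_induct)
    case (less m)
    show ?case
    proof (cases "m < n")
      case True
      then show ?thesis using K1 by (simp add: char_coeff_initial)
    next
      case False
      then obtain p where p: "m = p + n" by (metis add.commute le_add_diff_inverse not_less)
      have "norm (char_coeff n c m) \<le> (\<Sum>j<n. norm (c j) * norm (char_coeff n c (p + j)))"
        unfolding p char_coeff_recurrence norm_minus_cancel
        by (rule order_trans[OF norm_sum]) (simp add: norm_mult)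
      also have "\<dots> \<le> (\<Sum>j<n. norm (c j) * K ^ (m - 1))"
      proof (intro sum_mono mult_left_mono)
        fix j assume "j \<in> {..<n}"
        then have "p + j < m" using p by simp
        then have "norm (char_coeff n c (p + j)) \<le> K ^ (p + j)" using less by blast
        also have "\<dots> \<le> K ^ (m - 1)" using K1 \<open>p + j < m\<close> by (intro power_increasing) auto
        finally show "norm (char_coeff n c (p + j)) \<le> K ^ (m - 1)" .
      qed simp
      also have "\<dots> = (K - 1) * K ^ (m - 1)" by (simp add: K_def sum_distrib_right)
      also have "\<dots> \<le> K * K ^ (m - 1)" using K1 by (simp add: mult_right_mono)
      also have "\<dots> = K ^ m" using p assms by (simp add: power_eq_if)
      finally show ?thesis .
    qed
  qed
qed

lemma char_coeff_biorthogonal: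
  assumes "c n = 1" and "j < n" and "k < n"
  shows "(\<Sum>i<n - j. c (i + j + 1) * char_coeff n c (k + i)) = (if j = k then 1 else 0)"
proof (cases "j < k")
  case True
  define p where "p = k - j - 1"
  have "0 = (\<Sum>l<Suc n. c l * char_coeff n c (p + l))"
    using char_coeff_recurrence[of n c p] assms(1) by (simp add: add.commute)
  also have "\<dots> = (\<Sum>l<Suc j. c l * char_coeff n c (p + l))
      + (\<Sum>l=Suc j..<Suc n. c l * char_coeff n c (p + l))"
    using sum.atLeastLessThan_concat[of 0 "Suc j" "Suc n" "\<lambda>l. c l * char_coeff n c (p + l)"] assms(2)
    by (simp only: atLeast0LessThan)
  also have "(\<Sum>l<Suc j. c l * char_coeff n c (p + l)) = 0"
    using True assms(3) unfolding p_def by (intro sum.neutral) (auto simp: char_coeff_initial)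
  also have "(\<Sum>l=Suc j..<Suc n. c l * char_coeff n c (p + l))
      = (\<Sum>i<n - j. c (i + j + 1) * char_coeff n c (k + i))"
    using True unfolding sum.atLeastLessThan_shift_0[of _ "Suc j"] atLeast0LessThan p_def
    by (intro sum.cong) (auto simp: ac_simps)
  finally show ?thesis using True by simp
next
  case False
  have "(\<Sum>i<n - j. c (i + j + 1) * char_coeff n c (k + i))
      = (\<Sum>i<n - j. if i = n - 1 - k then c (i + j + 1) else 0)"
    using False assms(2,3) by (intro sum.cong refl) (auto simp: char_coeff_initial)
  also have "\<dots> = (if n - 1 - k < n - j then c (n - 1 - k + j + 1) else 0)"
    by (simp add: sum.delta)
  also have "\<dots> = (if j = k then 1 else 0)"
    using False assms by auto
  finally show ?thesis .
qed

lemma sum_triangle_swap: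
  fixes f :: "nat \<Rightarrow> nat \<Rightarrow> 'a::comm_monoid_add"
  shows "(\<Sum>j<n. \<Sum>i<n - j. f i j) = (\<Sum>i<n. \<Sum>j<n - i. f i j)"
proof -
  have "{..<n - j} = {i \<in> {..<n}. i + j < n}" for j by auto
  moreover have "{..<n - i} = {j \<in> {..<n}. i + j < n}" for i by auto
  ultimately show ?thesis
    using sum.swap_restrict[of "{..<n}" "{..<n}" "\<lambda>j i. f i j" "\<lambda>j i. i + j < n"] by simp
qed

lemma char_coeff_interpolation:
  assumes "c n = 1" and "k < n"
  shows "(\<Sum>i<n. (\<Sum>j<n - i. c (i + j + 1) * d j) * char_coeff n c (k + i)) = d k"
proof -
  have "(\<Sum>i<n. (\<Sum>j<n - i. c (i + j + 1) * d j) * char_coeff n c (k + i))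
      = (\<Sum>i<n. \<Sum>j<n - i. c (i + j + 1) * char_coeff n c (k + i) * d j)"
    unfolding sum_distrib_right by (simp add: mult_ac)
  also have "\<dots> = (\<Sum>j<n. \<Sum>i<n - j. c (i + j + 1) * char_coeff n c (k + i) * d j)"
    by (rule sum_triangle_swap[symmetric])
  also have "\<dots> = (\<Sum>j<n. (\<Sum>i<n - j. c (i + j + 1) * char_coeff n c (k + i)) * d j)"
    by (simp add: sum_distrib_right)
  also have "\<dots> = (\<Sum>j<n. (if j = k then d j else 0))"
    using char_coeff_biorthogonal[of c n _ k] assms by (intro sum.cong) auto
  also have "\<dots> = d k" using assms(2) by simp
  finally show ?thesis .
qed

definition egf :: "(nat \<Rightarrow> 'a::{real_normed_field,banach}) \<Rightarrow> 'a \<Rightarrow> 'a" where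
  "egf b z = (\<Sum>m. b m / fact m * z ^ m)"

lemma summable_egf:
  fixes b :: "nat \<Rightarrow> 'a::{real_normed_field,banach}"
  assumes "\<And>m. norm (b m) \<le> B * K ^ m"
  shows "summable (\<lambda>m. b m / fact m * z ^ m)"
proof (rule summable_comparison_test')
  show "summable (\<lambda>m. B * (inverse (fact m) * (K * norm z) ^ m))"
    by (intro summable_mult summable_exp)
  fix m :: nat
  have "norm (b m / fact m * z ^ m) = norm (b m) * norm z ^ m / fact m"
    by (simp add: norm_mult norm_divide norm_power)
  also have "\<dots> \<le> B * K ^ m * norm z ^ m / fact m"
    by (intro divide_right_mono mult_right_mono assms) auto
  also have "\<dots> = B * (inverse (fact m) * (K * norm z) ^ m)"
    by (simp add: power_mult_distrib field_simps)
  finally show "norm (b m / fact m * z ^ m) \<le> B * (inverse (fact m) * (K * norm z) ^ m)" .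
qed

lemma egf_has_field_derivative:
  fixes b :: "nat \<Rightarrow> 'a::{real_normed_field,banach}"
  assumes "\<And>z. summable (\<lambda>m. b m / fact m * z ^ m)"
  shows "(egf b has_field_derivative egf (\<lambda>m. b (Suc m)) z) (at z)"
proof -
  have "diffs (\<lambda>m. b m / fact m) = (\<lambda>m. b (Suc m) / fact m)"
    by (auto simp: diffs_def fun_eq_iff field_simps simp del: of_nat_Suc)
  then show ?thesis
    using termdiffs_strong_converges_everywhere[of "\<lambda>m. b m / fact m" z] assms
    by (simp add: egf_def[abs_def])
qed

lemma egf_0 [simp]: "egf b 0 = b 0"
  unfolding egf_def using powser_zero[of "\<lambda>m. b m / fact m"] by simp

lemma egf_linear:
  fixes b :: "'i \<Rightarrow> nat \<Rightarrow> 'a::{real_normed_field,banach}"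
  assumes "finite J" and "\<And>j. j \<in> J \<Longrightarrow> summable (\<lambda>m. b j m / fact m * z ^ m)"
  shows "egf (\<lambda>m. \<Sum>j\<in>J. a j * b j m) z = (\<Sum>j\<in>J. a j * egf (b j) z)"
proof -
  have "egf (\<lambda>m. \<Sum>j\<in>J. a j * b j m) z = (\<Sum>m. \<Sum>j\<in>J. a j * (b j m / fact m * z ^ m))"
    unfolding egf_def by (simp add: sum_divide_distrib sum_distrib_right mult.assoc)
  also have "\<dots> = (\<Sum>j\<in>J. \<Sum>m. a j * (b j m / fact m * z ^ m))"
    using assms by (intro suminf_sum summable_mult) auto
  also have "\<dots> = (\<Sum>j\<in>J. a j * egf (b j) z)"
    unfolding egf_def using assms(2) by (intro sum.cong refl suminf_mult) auto
  finally show ?thesis .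
qed

definition char_series :: "nat \<Rightarrow> (nat \<Rightarrow> complex) \<Rightarrow> nat \<Rightarrow> real \<Rightarrow> complex" where
  "char_series n c k x = egf (\<lambda>m. char_coeff n c (m + k)) (complex_of_real x)"

lemma summable_char_series:
  assumes "0 < n"
  shows "summable (\<lambda>m. char_coeff n c (m + k) / fact m * z ^ m)"
proof (rule summable_egf)
  fix m
  show "norm (char_coeff n c (m + k))
      \<le> (1 + (\<Sum>j<n. norm (c j))) ^ k * (1 + (\<Sum>j<n. norm (c j))) ^ m"
    using norm_char_coeff_le[OF assms, of c "m + k"] by (simp add: power_add mult.commute)
qed

lemma char_series_has_vector_derivative:
  assumes "0 < n"
  shows "(char_series n c k has_vector_derivative char_series n c (Suc k) x) (at x)"
proof -
  have "(egf (\<lambda>m. char_coeff n c (m + k)) has_field_derivative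
      egf (\<lambda>m. char_coeff n c (m + Suc k)) z) (at z)" for z
    using egf_has_field_derivative[of "\<lambda>m. char_coeff n c (m + k)"] summable_char_series[OF assms]
    by simp
  from has_vector_derivative_real_field[OF this]
  show ?thesis unfolding char_series_def[abs_def] by simp
qed

lemma char_series_0: "char_series n c k 0 = char_coeff n c k"
  by (simp add: char_series_def)

lemma char_series_recurrence:
  assumes "0 < n"
  shows "char_series n c (k + n) x = - (\<Sum>j<n. c j * char_series n c (k + j) x)"
proof -
  have "char_series n c (k + n) x
      = egf (\<lambda>m. \<Sum>j<n. - c j * char_coeff n c (m + (k + j))) (complex_of_real x)"
    unfolding char_series_def
    by (simp only: add.assoc[symmetric] char_coeff_recurrence mult_minus_left sum_negf)
  also have "\<dots> = (\<Sum>j<n. - c j * char_series n c (k + j) x)"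
    unfolding char_series_def using summable_char_series[OF assms]
    by (intro egf_linear) auto
  finally show ?thesis by (simp add: sum_negf)
qed

lemma hderiv_0 [simp]: "hderiv 0 f = f"
  by (simp add: hderiv_def)

lemma hderiv_Suc: "hderiv (Suc k) f = (\<lambda>x. vector_derivative (hderiv k f) (at x))"
  by (simp add: hderiv_def)

lemma hderiv_char_series:
  assumes "0 < n"
  shows "hderiv k (char_series n c 0) = char_series n c k"
proof (induction k)
  case 0
  then show ?case by simp
next
  case (Suc k)
  then show ?case
    using vector_derivative_at[OF char_series_has_vector_derivative[OF assms]]
    by (simp add: hderiv_Suc)
qed

text \<open>
  \<open>y k\<close> stands for the \<open>k\<close>-th derivative: \<open>(\<lambda>k. hderiv k w)\<close> is a solution whenever
  \<open>w \<in> Cn n UNIV\<close> and \<open>Dop n c w = 0\<close> with \<open>c n = 1\<close>.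
\<close>
definition companion_solution :: "nat \<Rightarrow> (nat \<Rightarrow> complex) \<Rightarrow> (nat \<Rightarrow> real \<Rightarrow> complex) \<Rightarrow> bool" where
  "companion_solution n c y \<longleftrightarrow>
     (\<forall>k<n. \<forall>x. (y k has_vector_derivative y (Suc k) x) (at x)) \<and>
     (\<forall>x. y n x = - (\<Sum>j<n. c j * y j x))"

lemma companion_solution_diff:
  assumes "companion_solution n c y" and "companion_solution n c z"
  shows "companion_solution n c (\<lambda>k x. y k x - z k x)"
  using assms unfolding companion_solution_def
  by (auto intro: has_vector_derivative_diff simp: right_diff_distrib sum_subtractf)

lemma companion_solution_sum:
  assumes "finite I" and "\<And>i. i \<in> I \<Longrightarrow> companion_solution n c (y i)"
  shows "companion_solution n c (\<lambda>k x. \<Sum>i\<in>I. a i * y i k x)"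
  using assms unfolding companion_solution_def
  by (auto intro!: has_vector_derivative_sum has_vector_derivative_mult_right
      simp: sum_distrib_left mult.left_commute sum_negf intro: sum.swap)

lemma companion_solution_char_series:
  assumes "0 < n"
  shows "companion_solution n c (\<lambda>k. char_series n c (k + i))"
  unfolding companion_solution_def
  using char_series_has_vector_derivative[OF assms] char_series_recurrence[OF assms, of c i]
  by (simp add: add.commute)

lemma Dop_eq_0_hderiv:
  assumes "c n = 1" and "Dop n c w = (\<lambda>_. 0)"
  shows "hderiv n w x = - (\<Sum>j<n. c j * hderiv j w x)"
proof -
  have "(\<Sum>j<Suc n. c j * hderiv j w x) = 0"
    using fun_cong[OF assms(2), of x] by (simp add: Dop_def lessThan_Suc_atMost)
  then show ?thesis using assms(1) by (simp add: eq_neg_iff_add_eq_0 add.commute)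
qed

lemma companion_solution_hderiv_shift:
  assumes "c n = 1" and "w \<in> Cn n UNIV" and "Dop n c w = (\<lambda>_. 0)"
  shows "companion_solution n c (\<lambda>k x. hderiv k w (x + v))"
  unfolding companion_solution_def
proof (intro conjI allI impI)
  fix k x assume "k < n"
  have "((\<lambda>x. x + v) has_vector_derivative 1) (at x)"
    by (auto intro!: derivative_eq_intros)
  moreover have "(hderiv k w has_vector_derivative hderiv (Suc k) w (x + v)) (at (x + v))"
    using assms(2) \<open>k < n\<close> by (simp add: Cn_def)
  ultimately show "((\<lambda>x. hderiv k w (x + v)) has_vector_derivative hderiv (Suc k) w (x + v)) (at x)"
    using vector_diff_chain_at by (fastforce simp: o_def)
next
  show "hderiv n w (x + v) = - (\<Sum>j<n. c j * hderiv j w (x + v))" for x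
    using Dop_eq_0_hderiv[OF assms(1,3)] .
qed

lemma companion_solution_norm_Suc_le:
  assumes "companion_solution n c y" and "j < n" and "\<And>i. i < n \<Longrightarrow> norm (y i t) \<le> S"
  shows "norm (y (Suc j) t) \<le> (1 + (\<Sum>i<n. norm (c i))) * S"
proof -
  have "norm (y 0 t) \<le> S" using assms(2,3) by simp
  then have "0 \<le> S" by (rule order_trans[OF norm_ge_zero])
  show ?thesis
  proof (cases "Suc j < n")
    case True
    have "S \<le> (1 + (\<Sum>i<n. norm (c i))) * S"
      using \<open>0 \<le> S\<close> by (simp add: distrib_right sum_nonneg)
    then show ?thesis using assms(3)[OF True] by simp
  next
    case False
    then have "Suc j = n" using assms(2) by simp
    then have "norm (y (Suc j) t) = norm (\<Sum>i<n. c i * y i t)"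
      using assms(1) unfolding companion_solution_def by simp
    also have "\<dots> \<le> (\<Sum>i<n. norm (c i) * norm (y i t))"
      by (rule order_trans[OF norm_sum]) (simp add: norm_mult)
    also have "\<dots> \<le> (\<Sum>i<n. norm (c i) * S)"
      using assms(3) by (intro sum_mono mult_left_mono) auto
    also have "\<dots> \<le> (1 + (\<Sum>i<n. norm (c i))) * S"
      using \<open>0 \<le> S\<close> by (simp add: sum_distrib_right[symmetric] distrib_right)
    finally show ?thesis .
  qed
qed

lemma companion_solution_norm_le_mean_value:
  assumes sol: "companion_solution n c y" and "k < n" and "y k a = 0"
    and "convex I" and "a \<in> I" and "t \<in> I"
    and bound: "\<And>i u. i < n \<Longrightarrow> u \<in> I \<Longrightarrow> norm (y i u) \<le> S"
  shows "norm (y k t) \<le> (1 + (\<Sum>i<n. norm (c i))) * S * \<bar>t - a\<bar>"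
proof -
  have "norm (y k t - y k a) \<le> (1 + (\<Sum>i<n. norm (c i))) * S * norm (t - a)"
  proof (rule differentiable_bound[of I "y k" "\<lambda>u d. d *\<^sub>R y (Suc k) u"])
    show "(y k has_derivative (\<lambda>d. d *\<^sub>R y (Suc k) u)) (at u within I)" for u
      using sol \<open>k < n\<close> unfolding companion_solution_def has_vector_derivative_def
      by (blast intro: has_derivative_at_withinI)
    show "onorm (\<lambda>d. d *\<^sub>R y (Suc k) u) \<le> (1 + (\<Sum>i<n. norm (c i))) * S" if "u \<in> I" for u
      using companion_solution_norm_Suc_le[OF sol \<open>k < n\<close> bound[OF _ that]]
      by (intro onorm_le) (simp add: mult.commute mult_left_mono)
  qed fact+
  then show ?thesis using assms(3) by simp
qed

lemma companion_solution_vanishes_near: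
  assumes "0 < n" and sol: "companion_solution n c y" and zero: "\<And>k. k < n \<Longrightarrow> y k a = 0"
  shows "\<exists>h>0. \<forall>x. \<bar>x - a\<bar> \<le> h \<longrightarrow> (\<forall>k<n. y k x = 0)"
proof -
  define K where "K = 1 + (\<Sum>i<n. norm (c i))"
  \<comment> \<open>chosen so that the mean value estimate below contracts by the factor \<open>n K h = 1/2\<close>\<close>
  define h where "h = 1 / (2 * real n * K)"
  define I where "I = {a - h..a + h}"
  define \<phi> where "\<phi> t = (\<Sum>k<n. norm (y k t))" for t
  have "1 \<le> K" unfolding K_def by (simp add: sum_nonneg)
  then have "0 < h" using assms(1) unfolding h_def by simp
  have deriv: "(y k has_vector_derivative y (Suc k) x) (at x)" if "k < n" for k x
    using sol that unfolding companion_solution_def by blast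
  have "continuous_on I \<phi>"
    unfolding \<phi>_def using deriv
    by (intro continuous_on_sum continuous_on_norm continuous_on_vector_derivative)
      (auto intro: has_vector_derivative_at_within)
  then obtain t0 where "t0 \<in> I" and t0_max: "\<And>t. t \<in> I \<Longrightarrow> \<phi> t \<le> \<phi> t0"
    using continuous_attains_sup[of I \<phi>] \<open>0 < h\<close> unfolding I_def by auto
  define S where "S = \<phi> t0"
  have le_phi: "norm (y k t) \<le> \<phi> t" if "k < n" for k t
    unfolding \<phi>_def using that by (intro member_le_sum) auto
  have le_S: "norm (y k t) \<le> S" if "k < n" "t \<in> I" for k t
    using le_phi[OF that(1), of t] t0_max[OF that(2)] unfolding S_def by linarith
  have "0 \<le> S" using le_S[OF assms(1) \<open>t0 \<in> I\<close>] by (rule order_trans[OF norm_ge_zero])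
  have y_le: "norm (y k t) \<le> K * S * h" if "k < n" "t \<in> I" for k t
  proof -
    have "norm (y k t) \<le> K * S * \<bar>t - a\<bar>"
      unfolding K_def using that \<open>0 < h\<close> le_S
      by (intro companion_solution_norm_le_mean_value[OF sol that(1) zero[OF that(1)], of I])
        (auto simp: I_def)
    also have "\<dots> \<le> K * S * h"
      using \<open>t \<in> I\<close> \<open>1 \<le> K\<close> \<open>0 \<le> S\<close> unfolding I_def by (intro mult_left_mono) auto
    finally show ?thesis .
  qed
  have half: "\<phi> t \<le> S / 2" if "t \<in> I" for t
  proof -
    have "\<phi> t \<le> (\<Sum>k<n. K * S * h)" unfolding \<phi>_def using y_le that by (intro sum_mono) auto
    also have "\<dots> = S / 2" using \<open>1 \<le> K\<close> assms(1) unfolding h_def by (simp add: field_simps)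
    finally show ?thesis .
  qed
  have "S \<le> 0" using half[OF \<open>t0 \<in> I\<close>] unfolding S_def by simp
  have "y k x = 0" if "\<bar>x - a\<bar> \<le> h" and "k < n" for x k
  proof -
    have "x \<in> I" using that(1) unfolding I_def by auto
    then have "norm (y k x) \<le> 0" using le_phi[OF that(2), of x] half[of x] \<open>S \<le> 0\<close> by linarith
    then show ?thesis by simp
  qed
  with \<open>0 < h\<close> show ?thesis by blast
qed

lemma companion_solution_unique:
  assumes "0 < n" and sol: "companion_solution n c y" and zero: "\<And>k. k < n \<Longrightarrow> y k a = 0"
    and "k < n"
  shows "y k x = 0"
proof -
  define Z where "Z = (\<Inter>k\<in>{..<n}. {x. y k x = 0})"
  have "continuous_on UNIV (y k)" if "k < n" for k
    using sol that unfolding companion_solution_def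
    by (intro continuous_on_vector_derivative) (auto intro: has_vector_derivative_at_within)
  then have "closed Z" unfolding Z_def by (auto intro!: closed_INT closed_Collect_eq)
  moreover have "open Z"
    unfolding open_contains_ball
  proof
    fix b assume "b \<in> Z"
    then obtain h where "0 < h" and h: "\<forall>x. \<bar>x - b\<bar> \<le> h \<longrightarrow> (\<forall>k<n. y k x = 0)"
      using companion_solution_vanishes_near[OF assms(1) sol] unfolding Z_def by blast
    then have "ball b h \<subseteq> Z" by (auto simp: Z_def dist_real_def)
    with \<open>0 < h\<close> show "\<exists>e>0. ball b e \<subseteq> Z" by blast
  qed
  moreover have "a \<in> Z" using zero unfolding Z_def by simp
  ultimately have "Z = UNIV" using clopen[of Z] by blast
  then show ?thesis using \<open>k < n\<close> unfolding Z_def by blast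
qed

lemma char_sol_eq_char_series:
  assumes "0 < n" and "c n = 1"
  shows "char_sol n c = char_series n c 0"
  unfolding char_sol_def
proof (rule the_equality)
  have "continuous_on UNIV (char_series n c n)"
    using char_series_has_vector_derivative[OF assms(1)]
    by (intro continuous_on_vector_derivative) (auto intro: has_vector_derivative_at_within)
  then have "char_series n c 0 \<in> Cn n UNIV"
    using char_series_has_vector_derivative[OF assms(1)]
    by (simp add: Cn_def hderiv_char_series[OF assms(1)])
  moreover have "Dop n c (char_series n c 0) = (\<lambda>_. 0)"
    using char_series_recurrence[OF assms(1), of c 0] assms(2)
    by (simp add: Dop_def hderiv_char_series[OF assms(1)] fun_eq_iff lessThan_Suc_atMost[symmetric])
  moreover have "\<forall>k<n. hderiv k (char_series n c 0) 0 = (if k = n - 1 then 1 else 0)"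
    by (auto simp: hderiv_char_series[OF assms(1)] char_series_0 char_coeff_initial)
  ultimately show "char_series n c 0 \<in> Cn n UNIV \<and> Dop n c (char_series n c 0) = (\<lambda>_. 0) \<and>
      (\<forall>k<n. hderiv k (char_series n c 0) 0 = (if k = n - 1 then 1 else 0))"
    by blast
next
  fix w
  assume "w \<in> Cn n UNIV \<and> Dop n c w = (\<lambda>_. 0) \<and>
      (\<forall>k<n. hderiv k w 0 = (if k = n - 1 then 1 else 0))"
  then have w: "w \<in> Cn n UNIV" "Dop n c w = (\<lambda>_. 0)"
    and init: "\<forall>k<n. hderiv k w 0 = (if k = n - 1 then 1 else 0)"
    by blast+
  have sol: "companion_solution n c (\<lambda>k x. hderiv k w (x + 0) - char_series n c (k + 0) x)"
    using assms w
    by (intro companion_solution_diff companion_solution_hderiv_shift companion_solution_char_series)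
  have "hderiv k w 0 - char_series n c k 0 = 0" if "k < n" for k
    using init that by (auto simp: char_series_0 char_coeff_initial)
  then have "w x - char_series n c 0 x = 0" for x
    using companion_solution_unique[OF assms(1) sol, of 0 0 x] assms(1) by simp
  then show "w = char_series n c 0" by auto
qed

theorem mainTheorem1:
  fixes n :: nat and c :: "nat \<Rightarrow> complex" and w :: "real \<Rightarrow> complex" and u v :: real
  assumes "c n = 1"
    and "w \<in> Cn n UNIV"
    and "Dop n c w = (\<lambda>_. 0)"
  shows "w (u + v) = (\<Sum>j<n. \<Sum>i<n - j. c (i + j + 1) * hderiv i (char_sol n c) u * hderiv j w v)"
proof (cases "n = 0")
  case True
  then show ?thesis using assms(1) fun_cong[OF assms(3), of "u + v"] by (simp add: Dop_def)
next
  case False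
  then have "0 < n" by simp
  define \<alpha> where "\<alpha> i = (\<Sum>j<n - i. c (i + j + 1) * hderiv j w v)" for i
  define y where "y k x = hderiv k w (x + v) - (\<Sum>i<n. \<alpha> i * char_series n c (k + i) x)" for k x
  have sol: "companion_solution n c y"
    unfolding y_def using assms(1-3) \<open>0 < n\<close>
    by (intro companion_solution_diff companion_solution_hderiv_shift companion_solution_sum
        companion_solution_char_series) simp_all
  have zero: "y k 0 = 0" if "k < n" for k
    using char_coeff_interpolation[of c n k "\<lambda>j. hderiv j w v"] assms(1) that
    unfolding y_def \<alpha>_def char_series_0 by simp
  have "y 0 u = 0" by (rule companion_solution_unique[OF \<open>0 < n\<close> sol zero \<open>0 < n\<close>])
  then have "w (u + v) = (\<Sum>i<n. \<alpha> i * char_series n c i u)" by (simp add: y_def)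
  also have "\<dots> = (\<Sum>i<n. \<Sum>j<n - i. c (i + j + 1) * char_series n c i u * hderiv j w v)"
    unfolding \<alpha>_def sum_distrib_right sum_distrib_left by (simp add: mult_ac)
  also have "\<dots> = (\<Sum>j<n. \<Sum>i<n - j. c (i + j + 1) * char_series n c i u * hderiv j w v)"
    by (rule sum_triangle_swap[symmetric])
  finally show ?thesis
    using \<open>0 < n\<close> assms(1) by (simp add: char_sol_eq_char_series hderiv_char_series)
qed

end
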